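(* Let $\sigma_{CF2}$ be CF2 semantics. For every two argumentation frameworks $AF=(AR,Attacks)$ and $AF'=(AR',Attacks')$ with $AF\preceq_N AF'$: $$\forall E\in\sigma_{CF2}(AF)\ \exists E'\in\sigma_{CF2}(AF') \text{ such that } (E'\not\subseteq AR\ \lor\ E'=E).$$
   Context: An argumentation framework is a pair $AF=(AR,Attacks)$ with $AR$ a finite set and $Attacks\subseteq AR\times AR$; $a$ attacks $b$ iff $(a,b)\in Attacks$; a set $S$ attacks $b$ iff some element of $S$ attacks $b$. $AF\preceq_N AF'$ (normal expansion) iff $AR\subseteq AR'$, $Attacks\subseteq Attacks'$ and no $(a,b)\in Attacks'\setminus Attacks$ has $a,b\in AR$. $S$ is conflict-free iff no element of $S$ attacks an element of $S$; a naive extension is a $\subseteq$-maximal conflict-free set. Attack sequence: $\langle a_1,\dots,a_n\rangle$ of pairwise distinct arguments with $(a_i,a_{i+1})\in Attacks$; $b$ is reachable from $a$ iff such a sequence has $a_1=a,a_n=b$. SCCs: maximal sets of mutually reachable arguments; $SCCS_{AF}$ is the set of them. $AF\downarrow_S=(S,Attacks\cap(S\times S))$. For an SCC $S$ and $E\subseteq AR$: $S^-_{out}=\{a\notin S: a\text{ attacks some element of }S\}$; $D_{AF}(S,E)=\{a\in S: E\cap S^-_{out}\text{ attacks }a\}$; $P_{AF}(S,E)=\{a\in S: E\cap S^-_{out}\text{ does not attack }a\text{ and }\exists b\in S^-_{out}\text{ attacking }a\text{ such that }E\text{ does not attack }b\}$; $UP_{AF}(S,E)=S\setminus D_{AF}(S,E)$.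 CF2: $E\subseteq AR$ is a CF2 extension of $AF$ iff either $|SCCS_{AF}|=1$ and $E$ is a naive extension of $AF$, or $|SCCS_{AF}|>1$ and for every $S\in SCCS_{AF}$, $E\cap S$ is a CF2 extension of $AF\downarrow_{UP_{AF}(S,E)}$. $\sigma_{CF2}(AF)$ is the set of all CF2 extensions. *)

theory Defs
  imports Main
begin

definition is_AF :: "'a set \<Rightarrow> ('a \<times> 'a) set \<Rightarrow> bool" where
  "is_AF AR Att \<longleftrightarrow> finite AR \<and> Att \<subseteq> AR \<times> AR"

definition normal_expansion ::
  "'a set \<Rightarrow> ('a \<times> 'a) set \<Rightarrow> 'a set \<Rightarrow> ('a \<times> 'a) set \<Rightarrow> bool" where
  "normal_expansion AR Att AR' Att' \<longleftrightarrow>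
     AR \<subseteq> AR' \<and> Att \<subseteq> Att' \<and>
     (\<forall>(a, b) \<in> Att' - Att. \<not> (a \<in> AR \<and> b \<in> AR))"

definition set_attacks :: "('a \<times> 'a) set \<Rightarrow> 'a set \<Rightarrow> 'a \<Rightarrow> bool" where
  "set_attacks Att S b \<longleftrightarrow> (\<exists>a \<in> S. (a, b) \<in> Att)"

definition conflict_free :: "('a \<times> 'a) set \<Rightarrow> 'a set \<Rightarrow> bool" where
  "conflict_free Att S \<longleftrightarrow> (\<forall>a \<in> S. \<forall>b \<in> S. (a, b) \<notin> Att)"

definition naive_ext :: "'a set \<Rightarrow> ('a \<times> 'a) set \<Rightarrow> 'a set \<Rightarrow> bool" where
  "naive_ext AR Att E \<longleftrightarrow> E \<subseteq> AR \<and> conflict_free Att E \<and>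
     (\<forall>T. E \<subseteq> T \<and> T \<subseteq> AR \<and> conflict_free Att T \<longrightarrow> T = E)"

definition attack_seq :: "'a set \<Rightarrow> ('a \<times> 'a) set \<Rightarrow> 'a list \<Rightarrow> bool" where
  "attack_seq AR Att xs \<longleftrightarrow> xs \<noteq> [] \<and> distinct xs \<and> set xs \<subseteq> AR \<and>
     (\<forall>i. Suc i < length xs \<longrightarrow> (xs ! i, xs ! Suc i) \<in> Att)"

definition reachable :: "'a set \<Rightarrow> ('a \<times> 'a) set \<Rightarrow> 'a \<Rightarrow> 'a \<Rightarrow> bool" where
  "reachable AR Att a b \<longleftrightarrow>
     (\<exists>xs. attack_seq AR Att xs \<and> hd xs = a \<and> last xs = b)"

definition mutually_reachable :: "'a set \<Rightarrow> ('a \<times> 'a) set \<Rightarrow> 'a set \<Rightarrow> bool" where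
  "mutually_reachable AR Att S \<longleftrightarrow> (\<forall>a \<in> S. \<forall>b \<in> S. reachable AR Att a b)"

definition SCCS :: "'a set \<Rightarrow> ('a \<times> 'a) set \<Rightarrow> 'a set set" where
  "SCCS AR Att = {S. S \<noteq> {} \<and> S \<subseteq> AR \<and> mutually_reachable AR Att S \<and>
     (\<forall>T. S \<subseteq> T \<and> T \<subseteq> AR \<and> mutually_reachable AR Att T \<longrightarrow> T = S)}"

definition restrict_att :: "('a \<times> 'a) set \<Rightarrow> 'a set \<Rightarrow> ('a \<times> 'a) set" where
  "restrict_att Att S = Att \<inter> (S \<times> S)"

definition S_out_minus :: "'a set \<Rightarrow> ('a \<times> 'a) set \<Rightarrow> 'a set \<Rightarrow> 'a set" where
  "S_out_minus AR Att S = {a \<in> AR. a \<notin> S \<and> (\<exists>b \<in> S. (a, b) \<in> Att)}"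

definition D_set :: "'a set \<Rightarrow> ('a \<times> 'a) set \<Rightarrow> 'a set \<Rightarrow> 'a set \<Rightarrow> 'a set" where
  "D_set AR Att S E = {a \<in> S. set_attacks Att (E \<inter> S_out_minus AR Att S) a}"

definition P_set :: "'a set \<Rightarrow> ('a \<times> 'a) set \<Rightarrow> 'a set \<Rightarrow> 'a set \<Rightarrow> 'a set" where
  "P_set AR Att S E = {a \<in> S. \<not> set_attacks Att (E \<inter> S_out_minus AR Att S) a \<and>
     (\<exists>b \<in> S_out_minus AR Att S. (b, a) \<in> Att \<and> \<not> set_attacks Att E b)}"

definition UP_set :: "'a set \<Rightarrow> ('a \<times> 'a) set \<Rightarrow> 'a set \<Rightarrow> 'a set \<Rightarrow> 'a set" where
  "UP_set AR Att S E = S - D_set AR Att S E"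

text \<open>CF2 extensions, defined (well-founded) recursively on the framework.
  Convention: a framework with at most one SCC (including the empty framework)
  is the base case.\<close>
inductive cf2_ext :: "'a set \<Rightarrow> ('a \<times> 'a) set \<Rightarrow> 'a set \<Rightarrow> bool" where
  base: "card (SCCS AR Att) \<le> 1 \<Longrightarrow> naive_ext AR Att E \<Longrightarrow> cf2_ext AR Att E"
| step: "card (SCCS AR Att) > 1 \<Longrightarrow> E \<subseteq> AR \<Longrightarrow>
         (\<And>S. S \<in> SCCS AR Att \<Longrightarrow>
            cf2_ext (UP_set AR Att S E) (restrict_att Att (UP_set AR Att S E)) (E \<inter> S)) \<Longrightarrow>
         cf2_ext AR Att E"

end

(*
  A set E is a CF2 extension iff, for every SCC S, E restricted to S is a CF2 extension of
  the part of S not attacked by E from outside S. This local condition is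
  compositional: it holds for a union of SCCs iff it holds for each of them. Hence a framework
  splits along any unattacked set U: E is a CF2 extension iff E restricted to U is one of U and
  the rest of E is one of the remaining arguments minus those attacked by E restricted to U.

  The theorem follows by induction on the size of AF'. If AF' has a single SCC, either a new
  argument is not self-attacking, and any naive extension containing it leaves AR, or E itself
  remains naive in AF'. Otherwise split AF' along an initial SCC U', whose trace on AR is
  unattacked in AF, and apply the induction hypothesis to U' and to the remainder.
*)

theory Submission
  imports Defs "HOL-Library.Transitive_Closure_Table"
begin

section \<open>Reachability and strongly connected components\<close>

lemma rtrancl_if_successive:
  assumes "\<forall>i. Suc i < length xs \<longrightarrow> (xs ! i, xs ! Suc i) \<in> R" and "xs \<noteq> []"
  shows "(hd xs, last xs) \<in> R\<^sup>*"
proof -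
  have "(xs ! 0, xs ! i) \<in> R\<^sup>*" if "i < length xs" for i
    using that by (induction i) (auto simp: assms(1) intro: rtrancl_into_rtrancl)
  then show ?thesis
    using assms(2) by (simp add: hd_conv_nth last_conv_nth)
qed

lemma reachable_iff_rtrancl:
  assumes "R \<subseteq> A \<times> A"
  shows "reachable A R a b \<longleftrightarrow> a \<in> A \<and> (a, b) \<in> R\<^sup>*"
proof
  assume "reachable A R a b"
  then obtain xs where "attack_seq A R xs" "hd xs = a" "last xs = b"
    unfolding reachable_def by blast
  then show "a \<in> A \<and> (a, b) \<in> R\<^sup>*"
    using rtrancl_if_successive[of xs R] hd_in_set[of xs] unfolding attack_seq_def by auto
next
  assume ab: "a \<in> A \<and> (a, b) \<in> R\<^sup>*"
  let ?r = "\<lambda>x y. (x, y) \<in> R"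
  obtain xs where "rtrancl_path ?r a xs b"
    using ab rtranclp_eq_rtrancl_path[of ?r] by (auto simp: rtranclp_rtrancl_eq)
  then obtain ys where ys: "rtrancl_path ?r a ys b" "distinct (a # ys)"
    by (rule rtrancl_path_distinct)
  have "set ys \<subseteq> A"
    using assms rtrancl_path_Range[OF ys(1)] by blast
  moreover have "last (a # ys) = b"
    using ys(1) rtrancl_path_last[OF ys(1)] by (cases ys) (auto elim: rtrancl_path.cases)
  ultimately have "attack_seq A R (a # ys)"
    using ab ys rtrancl_path_nth[OF ys(1)] unfolding attack_seq_def by auto
  then show "reachable A R a b"
    unfolding reachable_def using \<open>last (a # ys) = b\<close> by force
qed

definition scc_of :: "'a set \<Rightarrow> ('a \<times> 'a) set \<Rightarrow> 'a \<Rightarrow> 'a set" where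
  "scc_of A R a = {b \<in> A. (a, b) \<in> R\<^sup>* \<and> (b, a) \<in> R\<^sup>*}"

lemma scc_of_subset: "scc_of A R a \<subseteq> A"
  unfolding scc_of_def by auto

lemma mem_scc_of_self: "a \<in> A \<Longrightarrow> a \<in> scc_of A R a"
  unfolding scc_of_def by auto

lemma scc_of_eq: "b \<in> scc_of A R a \<Longrightarrow> scc_of A R b = scc_of A R a"
  unfolding scc_of_def by (auto intro: rtrancl_trans)

lemma SCCS_eq_scc_of_image:
  assumes "R \<subseteq> A \<times> A"
  shows "SCCS A R = scc_of A R ` A"
proof -
  have mutual_iff: "mutually_reachable A R T \<longleftrightarrow> (\<forall>a\<in>T. \<forall>b\<in>T. (a, b) \<in> R\<^sup>*)"
    if "T \<subseteq> A" for T
    using that unfolding mutually_reachable_def reachable_iff_rtrancl[OF assms] by blast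
  have mutual_scc: "mutually_reachable A R (scc_of A R a)" for a
    by (subst mutual_iff[OF scc_of_subset]) (auto simp: scc_of_def intro: rtrancl_trans)
  show ?thesis
  proof
    show "SCCS A R \<subseteq> scc_of A R ` A"
    proof
      fix S assume S: "S \<in> SCCS A R"
      then obtain a where a: "a \<in> A" "a \<in> S"
        unfolding SCCS_def by blast
      have "S \<subseteq> scc_of A R a"
        using S a mutual_iff[of S] unfolding SCCS_def scc_of_def by auto
      then have "S = scc_of A R a"
        using S mutual_scc[of a] scc_of_subset[of A R a] unfolding SCCS_def by blast
      then show "S \<in> scc_of A R ` A"
        using a(1) by simp
    qed
    show "scc_of A R ` A \<subseteq> SCCS A R"
    proof
      fix S assume "S \<in> scc_of A R ` A"
      then obtain a where a: "a \<in> A" "S = scc_of A R a"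
        by blast
      have "T \<subseteq> S" if "S \<subseteq> T" "T \<subseteq> A" "mutually_reachable A R T" for T
        using that a mutual_iff[of T] mem_scc_of_self[of a A R] unfolding scc_of_def by blast
      then show "S \<in> SCCS A R"
        using a mutual_scc[of a] mem_scc_of_self[of a A R] scc_of_subset[of A R a]
        unfolding SCCS_def by blast
    qed
  qed
qed

lemma card_SCCS_le_1_iff:
  assumes "finite A" and "R \<subseteq> A \<times> A"
  shows "card (SCCS A R) \<le> 1 \<longleftrightarrow> (\<forall>a\<in>A. scc_of A R a = A)"
proof
  assume "card (SCCS A R) \<le> 1"
  moreover have "finite (SCCS A R)"
    using assms by (simp add: SCCS_eq_scc_of_image)
  ultimately have same: "scc_of A R a = scc_of A R b" if "a \<in> A" "b \<in> A" for a b
    using that card_le_Suc0_iff_eq[of "SCCS A R"] unfolding SCCS_eq_scc_of_image[OF assms(2)]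
    by (metis One_nat_def imageI)
  have "b \<in> scc_of A R a" if "a \<in> A" "b \<in> A" for a b
    using mem_scc_of_self[OF that(2)] same[OF that] by simp
  then show "\<forall>a\<in>A. scc_of A R a = A"
    by (meson subsetI subset_antisym scc_of_subset)
next
  assume "\<forall>a\<in>A. scc_of A R a = A"
  then have "SCCS A R \<subseteq> {A}"
    unfolding SCCS_eq_scc_of_image[OF assms(2)] by blast
  then show "card (SCCS A R) \<le> 1"
    using card_mono[of "{A}"] by fastforce
qed

section \<open>The CF2 condition on a set of arguments\<close>

definition outside_defeated :: "('a \<times> 'a) set \<Rightarrow> 'a set \<Rightarrow> 'a set \<Rightarrow> 'a set" where
  "outside_defeated R S E = {y \<in> S. \<exists>e \<in> E - S. (e, y) \<in> R}"

text \<open>The paper's condition on an SCC S, for an arbitrary set S: E \<inter> S is a CF2 extension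
  of the framework restricted to UP(S, E) (see UP_set_eq).\<close>

definition cf2_on :: "('a \<times> 'a) set \<Rightarrow> 'a set \<Rightarrow> 'a set \<Rightarrow> bool" where
  "cf2_on R S E \<longleftrightarrow>
     cf2_ext (S - outside_defeated R S E) (restrict_att R (S - outside_defeated R S E)) (E \<inter> S)"

lemma UP_set_eq:
  assumes "R \<subseteq> A \<times> A"
  shows "UP_set A R S E = S - outside_defeated R S E"
  using assms
  unfolding UP_set_def D_set_def outside_defeated_def set_attacks_def S_out_minus_def by blast

lemma outside_defeated_whole: "R \<subseteq> A \<times> A \<Longrightarrow> outside_defeated R A E = {}"
  unfolding outside_defeated_def by blast

lemma cf2_ext_subset: "cf2_ext A R E \<Longrightarrow> E \<subseteq> A"
  by (induction rule: cf2_ext.induct) (auto simp: naive_ext_def)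

lemma cf2_on_disjoint:
  assumes "cf2_on R S E"
  shows "E \<inter> outside_defeated R S E = {}"
proof -
  have "E \<inter> S \<subseteq> S - outside_defeated R S E"
    using assms unfolding cf2_on_def by (rule cf2_ext_subset)
  then show ?thesis
    unfolding outside_defeated_def by blast
qed

lemma restrict_att_subset: "restrict_att R S \<subseteq> S \<times> S"
  unfolding restrict_att_def by blast

lemma restrict_att_restrict_att: "T \<subseteq> S \<Longrightarrow> restrict_att (restrict_att R S) T = restrict_att R T"
  unfolding restrict_att_def by blast

lemma restrict_att_whole: "R \<subseteq> A \<times> A \<Longrightarrow> restrict_att R A = R"
  unfolding restrict_att_def by blast

lemma cf2_on_whole: "R \<subseteq> A \<times> A \<Longrightarrow> E \<subseteq> A \<Longrightarrow> cf2_on R A E \<longleftrightarrow> cf2_ext A R E"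
  unfolding cf2_on_def by (simp add: outside_defeated_whole restrict_att_whole Int_absorb2)

lemma cf2_ext_iff_cf2_on_scc_of:
  assumes "finite A" and "R \<subseteq> A \<times> A"
  shows "cf2_ext A R E \<longleftrightarrow> E \<subseteq> A \<and> (\<forall>a\<in>A. cf2_on R (scc_of A R a) E)"
proof (cases "card (SCCS A R) \<le> 1")
  case True
  then have sccA: "scc_of A R a = A" if "a \<in> A" for a
    using that card_SCCS_le_1_iff[OF assms] by blast
  show ?thesis
  proof (cases "A = {}")
    case True
    have "cf2_ext {} {} {}"
      by (rule cf2_ext.base) (auto simp: SCCS_eq_scc_of_image naive_ext_def conflict_free_def)
    then show ?thesis
      using True assms(2) cf2_ext_subset[of A R E] by auto
  next
    case False
    then show ?thesis
      using sccA cf2_on_whole[OF assms(2)] cf2_ext_subset[of A R E] by auto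
  qed
next
  case False
  then have "cf2_ext A R E \<longleftrightarrow> E \<subseteq> A \<and>
      (\<forall>S\<in>SCCS A R. cf2_ext (UP_set A R S E) (restrict_att R (UP_set A R S E)) (E \<inter> S))"
    by (auto intro: cf2_ext.step elim: cf2_ext.cases)
  then show ?thesis
    unfolding SCCS_eq_scc_of_image[OF assms(2)] UP_set_eq[OF assms(2)] cf2_on_def by simp
qed

section \<open>Compositionality over unions of SCCs\<close>

definition scc_closed :: "'a set \<Rightarrow> ('a \<times> 'a) set \<Rightarrow> 'a set \<Rightarrow> bool" where
  "scc_closed A R B \<longleftrightarrow> B \<subseteq> A \<and> (\<forall>a\<in>B. scc_of A R a \<subseteq> B)"

lemma scc_closed_scc_of: "scc_closed A R (scc_of A R a)"
  unfolding scc_closed_def by (simp add: scc_of_subset scc_of_eq)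

lemma scc_closed_Diff:
  assumes "scc_closed A R U"
  shows "scc_closed A R (A - U)"
proof -
  have "b \<notin> U" if "a \<in> A - U" and "b \<in> scc_of A R a" for a b
  proof
    assume "b \<in> U"
    moreover have "a \<in> scc_of A R b"
      using that scc_of_eq[of b A R a] mem_scc_of_self[of a A R] by simp
    ultimately show False
      using assms that(1) unfolding scc_closed_def by blast
  qed
  then show ?thesis
    using scc_of_subset[of A R] unfolding scc_closed_def by blast
qed

lemma scc_closed_restrict:
  assumes "scc_closed A R C" and "B \<subseteq> A"
  shows "scc_closed B (restrict_att R B) (C \<inter> B)"
proof -
  have "(restrict_att R B)\<^sup>* \<subseteq> R\<^sup>*"
    by (rule rtrancl_mono) (auto simp: restrict_att_def)
  then have "scc_of B (restrict_att R B) c \<subseteq> scc_of A R c" for c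
    using assms(2) unfolding scc_of_def by blast
  then show ?thesis
    using assms(1) scc_of_subset[of B "restrict_att R B"] unfolding scc_closed_def by blast
qed

lemma scc_closed_scc_of_Diff:
  assumes "scc_closed A R B" and "a \<in> B"
  shows "scc_closed (B - D) (restrict_att R (B - D)) (scc_of A R a - D)"
proof -
  have "scc_of A R a - D = scc_of A R a \<inter> (B - D)"
    using assms unfolding scc_closed_def by blast
  then show ?thesis
    using scc_closed_restrict[OF scc_closed_scc_of, of "B - D" A R a] assms(1)
    unfolding scc_closed_def by auto
qed

lemma outside_defeated_anti:
  "S \<subseteq> B \<Longrightarrow> outside_defeated R B E \<inter> S \<subseteq> outside_defeated R S E"
  unfolding outside_defeated_def by blast

lemma cf2_on_restrict_undefeated:
  assumes "S \<subseteq> B" and "E \<inter> outside_defeated R B E = {}"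
  defines "B' \<equiv> B - outside_defeated R B E"
  shows "cf2_on (restrict_att R B') (S - outside_defeated R B E) (E \<inter> B) \<longleftrightarrow> cf2_on R S E"
proof -
  let ?D = "outside_defeated R B E" and ?G = "restrict_att R B'"
  have undefeated: "S - ?D - outside_defeated ?G (S - ?D) (E \<inter> B) = S - outside_defeated R S E"
    using assms unfolding outside_defeated_def restrict_att_def by auto
  have "S - outside_defeated R S E \<subseteq> B'"
    using assms outside_defeated_anti[of S B R E] by blast
  moreover have "E \<inter> B \<inter> (S - ?D) = E \<inter> S"
    using assms by blast
  ultimately show ?thesis
    unfolding cf2_on_def undefeated by (simp add: restrict_att_restrict_att)
qed

lemma outside_defeated_disjoint_if_cf2_on_scc_of:
  assumes "scc_closed A R B" and "\<forall>a\<in>B. cf2_on R (scc_of A R a) E"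
  shows "E \<inter> outside_defeated R B E = {}"
proof -
  have "y \<notin> outside_defeated R B E" if "y \<in> E" "y \<in> B" for y
  proof
    assume "y \<in> outside_defeated R B E"
    moreover have "y \<in> scc_of A R y" and "scc_of A R y \<subseteq> B"
      using assms(1) \<open>y \<in> B\<close> mem_scc_of_self[of y A R] unfolding scc_closed_def by auto
    ultimately have "y \<in> outside_defeated R (scc_of A R y) E"
      using outside_defeated_anti[of "scc_of A R y" B R E] by blast
    then show False
      using cf2_on_disjoint assms(2) that by blast
  qed
  then show ?thesis
    unfolding outside_defeated_def by blast
qed

lemma cf2_on_iff_cf2_on_scc_of:
  assumes "finite A" and "R \<subseteq> A \<times> A" and "E \<subseteq> A" and "scc_closed A R B"
  shows "cf2_on R B E \<longleftrightarrow> (\<forall>a\<in>B. cf2_on R (scc_of A R a) E)"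
  using assms
proof (induction "card A" arbitrary: A R E B rule: less_induct)
  case less
  show ?case
  proof (cases "B = A")
    case True
    then show ?thesis
      using cf2_on_whole[OF less.prems(2,3)] cf2_ext_iff_cf2_on_scc_of[OF less.prems(1,2)]
        less.prems(3) by simp
  next
    case False
    define D where "D = outside_defeated R B E"
    define B' where "B' = B - D"
    define G where "G = restrict_att R B'"
    have "B \<subseteq> A"
      using less.prems(4) unfolding scc_closed_def by blast
    then have "B' \<subset> A"
      using False unfolding B'_def by blast
    then have "card B' < card A" and "finite B'"
      using less.prems(1) by (auto intro: psubset_card_mono finite_subset)
    have "G \<subseteq> B' \<times> B'"
      unfolding G_def by (rule restrict_att_subset)
    have "E \<inter> D = {}" if "cf2_on R B E \<or> (\<forall>a\<in>B. cf2_on R (scc_of A R a) E)"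
      using that cf2_on_disjoint outside_defeated_disjoint_if_cf2_on_scc_of[OF less.prems(4)]
      unfolding D_def by blast
    moreover have "cf2_on R B E \<longleftrightarrow> (\<forall>a\<in>B. cf2_on R (scc_of A R a) E)" if "E \<inter> D = {}"
    proof -
      have "E \<inter> B \<subseteq> B'"
        using that unfolding B'_def by blast
      have pieces: "scc_closed B' G (scc_of A R a - D)" if "a \<in> B" for a
        using scc_closed_scc_of_Diff[OF less.prems(4) that] unfolding B'_def G_def .
      have "cf2_on R B E \<longleftrightarrow> cf2_ext B' G (E \<inter> B)"
        unfolding cf2_on_def B'_def G_def D_def ..
      also have "\<dots> \<longleftrightarrow> (\<forall>b\<in>B'. cf2_on G (scc_of B' G b) (E \<inter> B))"
        using cf2_ext_iff_cf2_on_scc_of[OF \<open>finite B'\<close> \<open>G \<subseteq> B' \<times> B'\<close>] \<open>E \<inter> B \<subseteq> B'\<close>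
        by blast
      also have "\<dots> \<longleftrightarrow> (\<forall>a\<in>B. cf2_on G (scc_of A R a - D) (E \<inter> B))"
      proof -
        have "(\<forall>a\<in>B. cf2_on G (scc_of A R a - D) (E \<inter> B)) \<longleftrightarrow>
            (\<forall>a\<in>B. \<forall>c\<in>scc_of A R a - D. cf2_on G (scc_of B' G c) (E \<inter> B))"
          using less.hyps[OF \<open>card B' < card A\<close> \<open>finite B'\<close> \<open>G \<subseteq> B' \<times> B'\<close>
              \<open>E \<inter> B \<subseteq> B'\<close> pieces] by simp
        moreover have "scc_of A R a - D \<subseteq> B'" if "a \<in> B" for a
          using pieces[OF that] unfolding scc_closed_def by blast
        moreover have "b \<in> scc_of A R b - D" if "b \<in> B'" for b
          using that \<open>B \<subseteq> A\<close> mem_scc_of_self[of b A R] unfolding B'_def by blast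
        ultimately show ?thesis
          unfolding B'_def by blast
      qed
      also have "\<dots> \<longleftrightarrow> (\<forall>a\<in>B. cf2_on R (scc_of A R a) E)"
        using cf2_on_restrict_undefeated[of _ B E R] less.prems(4) that
        unfolding scc_closed_def B'_def G_def D_def by simp
      finally show ?thesis .
    qed
    ultimately show ?thesis
      by blast
  qed
qed

section \<open>Splitting along an unattacked set\<close>

definition unattacked :: "('a \<times> 'a) set \<Rightarrow> 'a set \<Rightarrow> bool" where
  "unattacked R U \<longleftrightarrow> (\<forall>(a, b)\<in>R. b \<in> U \<longrightarrow> a \<in> U)"

lemma unattacked_imp_scc_closed:
  assumes "R \<subseteq> A \<times> A" and "U \<subseteq> A" and "unattacked R U"
  shows "scc_closed A R U"
proof -
  have "a \<in> U" if "(a, b) \<in> R\<^sup>*" and "b \<in> U" for a b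
    using that assms(3) by (induction rule: converse_rtrancl_induct) (auto simp: unattacked_def)
  then show ?thesis
    using assms(2) unfolding scc_closed_def scc_of_def by blast
qed

lemma cf2_ext_split_unattacked:
  assumes "finite A" and "R \<subseteq> A \<times> A" and "E \<subseteq> A" and "U \<subseteq> A" and "unattacked R U"
  defines "W \<equiv> A - U - R `` (E \<inter> U)"
  shows "cf2_ext A R E \<longleftrightarrow>
    cf2_ext U (restrict_att R U) (E \<inter> U) \<and> cf2_ext W (restrict_att R W) (E - U)"
proof -
  have U_closed: "scc_closed A R U"
    using assms(2,4,5) by (rule unattacked_imp_scc_closed)
  have "cf2_ext A R E \<longleftrightarrow>
      (\<forall>a\<in>U. cf2_on R (scc_of A R a) E) \<and> (\<forall>a\<in>A - U. cf2_on R (scc_of A R a) E)"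
    using cf2_ext_iff_cf2_on_scc_of[OF assms(1,2)] assms(3,4) by auto
  also have "\<dots> \<longleftrightarrow> cf2_on R U E \<and> cf2_on R (A - U) E"
    using cf2_on_iff_cf2_on_scc_of[OF assms(1-3) U_closed]
      cf2_on_iff_cf2_on_scc_of[OF assms(1-3) scc_closed_Diff[OF U_closed]] by simp
  finally have "cf2_ext A R E \<longleftrightarrow> cf2_on R U E \<and> cf2_on R (A - U) E" .
  moreover have "outside_defeated R U E = {}"
    using assms(5) unfolding outside_defeated_def unattacked_def by blast
  moreover have "A - U - outside_defeated R (A - U) E = W" and "E \<inter> (A - U) = E - U"
    using assms(3) unfolding W_def outside_defeated_def by blast+
  ultimately show ?thesis
    unfolding cf2_on_def by simp
qed

lemma cf2_ext_Un_unattacked: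
  assumes "finite A" and "R \<subseteq> A \<times> A" and "U \<subseteq> A" and "unattacked R U"
    and "cf2_ext U (restrict_att R U) E1"
    and "cf2_ext (A - U - R `` E1) (restrict_att R (A - U - R `` E1)) E2"
  shows "cf2_ext A R (E1 \<union> E2)"
proof -
  have "E1 \<subseteq> U" and "E2 \<subseteq> A - U - R `` E1"
    using assms(5,6) by (auto dest: cf2_ext_subset)
  then have "(E1 \<union> E2) \<inter> U = E1" and "E1 \<union> E2 - U = E2" and "E1 \<union> E2 \<subseteq> A"
    using assms(3) by blast+
  then show ?thesis
    using cf2_ext_split_unattacked[OF assms(1,2) _ assms(3,4)] assms(5,6) by simp
qed

lemma ex_unattacked_scc_of:
  assumes "finite A" and "R \<subseteq> A \<times> A" and "A \<noteq> {}"
  obtains a where "a \<in> A" and "unattacked R (scc_of A R a)"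
proof -
  \<comment> \<open>An SCC with the fewest ancestors has no attackers outside itself.\<close>
  define ancestors where "ancestors a = {b \<in> A. (b, a) \<in> R\<^sup>*}" for a
  obtain a where a: "a \<in> A" and least: "\<And>b. b \<in> A \<Longrightarrow> card (ancestors a) \<le> card (ancestors b)"
    using assms(3) ex_has_least_nat[of "\<lambda>a. a \<in> A" _ "\<lambda>a. card (ancestors a)"] by blast
  have "c \<in> scc_of A R a" if "(c, s) \<in> R" and "s \<in> scc_of A R a" for c s
  proof (rule ccontr)
    assume c: "c \<notin> scc_of A R a"
    have "c \<in> A"
      using assms(2) that(1) by blast
    have "(c, a) \<in> R\<^sup>*"
      using that unfolding scc_of_def by (blast intro: converse_rtrancl_into_rtrancl)
    then have "ancestors c \<subset> ancestors a"
      using c a \<open>c \<in> A\<close> unfolding ancestors_def scc_of_def by (auto intro: rtrancl_trans)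
    then have "card (ancestors c) < card (ancestors a)"
      using assms(1) by (intro psubset_card_mono) (auto simp: ancestors_def)
    then show False
      using least[OF \<open>c \<in> A\<close>] by simp
  qed
  then show ?thesis
    using that a unfolding unattacked_def by blast
qed

lemma ex_proper_unattacked:
  assumes "finite A" and "R \<subseteq> A \<times> A" and "card (SCCS A R) > 1"
  obtains U where "U \<subseteq> A" and "U \<noteq> {}" and "U \<noteq> A" and "unattacked R U"
proof -
  have "A \<noteq> {}"
    using assms(3) by (auto simp: SCCS_eq_scc_of_image[OF assms(2)])
  then obtain a where "a \<in> A" and "unattacked R (scc_of A R a)"
    using ex_unattacked_scc_of[OF assms(1,2)] by blast
  moreover have "scc_of A R a \<noteq> A"
  proof
    assume "scc_of A R a = A"
    then have "scc_of A R b = A" if "b \<in> A" for b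
      using that scc_of_eq[of b A R a] by simp
    then show False
      using assms card_SCCS_le_1_iff by (metis not_le)
  qed
  ultimately show ?thesis
    using that[of "scc_of A R a"] scc_of_subset[of A R a] mem_scc_of_self[of a A R] by blast
qed

section \<open>Naive extensions\<close>

lemma cf2_ext_imp_naive_ext:
  assumes "cf2_ext A R E" and "R \<subseteq> A \<times> A"
  shows "naive_ext A R E"
  using assms
proof (induction rule: cf2_ext.induct)
  case (base A R E)
  then show ?case by simp
next
  case (step A R E)
  let ?S = "\<lambda>a. scc_of A R a"
  let ?U = "\<lambda>a. ?S a - outside_defeated R (?S a) E"
  have naive: "naive_ext (?U a) (restrict_att R (?U a)) (E \<inter> ?S a)" if "a \<in> A" for a
    using step.IH[of "?S a"] step.prems restrict_att_subset that
    unfolding SCCS_eq_scc_of_image[OF step.prems] UP_set_eq[OF step.prems] by blast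
  have "(e, e') \<notin> R" if "e \<in> E" and "e' \<in> E" for e e'
  proof
    assume "(e, e') \<in> R"
    moreover have "e' \<in> A" and "e' \<in> ?S e'"
      using step.hyps(2) that mem_scc_of_self[of e' A R] by blast+
    moreover note naive[OF \<open>e' \<in> A\<close>]
    ultimately show False
      using that unfolding naive_ext_def conflict_free_def restrict_att_def outside_defeated_def
      by blast
  qed
  then have "conflict_free R E"
    unfolding conflict_free_def by blast
  moreover have "t \<in> E" if "E \<subseteq> T" "T \<subseteq> A" "conflict_free R T" "t \<in> T" for T t
  proof -
    have "t \<in> A" and "t \<in> ?S t"
      using that mem_scc_of_self[of t A R] by blast+
    moreover have "t \<notin> outside_defeated R (?S t) E"
      using that unfolding conflict_free_def outside_defeated_def by blast
    moreover have "conflict_free (restrict_att R (?U t)) (insert t (E \<inter> ?S t))"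
      using that unfolding conflict_free_def restrict_att_def by blast
    ultimately show "t \<in> E"
      using naive[OF \<open>t \<in> A\<close>] unfolding naive_ext_def by blast
  qed
  ultimately show ?case
    using step.hyps(2) unfolding naive_ext_def by blast
qed

lemma naive_ext_exists:
  assumes "finite A" and "C \<subseteq> A" and "conflict_free R C"
  obtains E where "C \<subseteq> E" and "naive_ext A R E"
proof -
  let ?M = "{T. C \<subseteq> T \<and> T \<subseteq> A \<and> conflict_free R T}"
  have "?M \<subseteq> Pow A"
    by blast
  then have "finite ?M"
    using assms(1) finite_subset by blast
  moreover have "C \<in> ?M"
    using assms(2,3) by blast
  ultimately obtain E where E: "E \<in> ?M" and maximal: "\<forall>T\<in>?M. E \<subseteq> T \<longrightarrow> E = T"
    using finite_has_maximal[of ?M] by blast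
  have "naive_ext A R E"
    unfolding naive_ext_def
  proof (intro conjI allI impI)
    fix T assume "E \<subseteq> T \<and> T \<subseteq> A \<and> conflict_free R T"
    then show "T = E"
      using E maximal by (metis (mono_tags, lifting) mem_Collect_eq order_trans)
  qed (use E in auto)
  then show ?thesis
    using that E by blast
qed

section \<open>Normal expansions\<close>

lemma normal_expansion_old_attack:
  "normal_expansion A R A' R' \<Longrightarrow> (a, b) \<in> R' \<Longrightarrow> a \<in> A \<Longrightarrow> b \<in> A \<Longrightarrow> (a, b) \<in> R"
  unfolding normal_expansion_def by blast

lemma normal_expansion_restrict:
  "normal_expansion A R A' R' \<Longrightarrow> Y \<subseteq> A \<Longrightarrow> Y \<subseteq> Y' \<Longrightarrow>
    normal_expansion Y (restrict_att R Y) Y' (restrict_att R' Y')"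
  unfolding normal_expansion_def restrict_att_def by blast

lemma normal_expansion_unattacked_Int:
  "normal_expansion A R A' R' \<Longrightarrow> R \<subseteq> A \<times> A \<Longrightarrow> unattacked R' U \<Longrightarrow> unattacked R (U \<inter> A)"
  unfolding normal_expansion_def unattacked_def by blast

lemma normal_expansion_remainder:
  "normal_expansion A R A' R' \<Longrightarrow> R \<subseteq> A \<times> A \<Longrightarrow> X \<subseteq> A \<Longrightarrow>
    (A' - U - R' `` X) \<inter> A = A - U - R `` X"
  unfolding normal_expansion_def by blast

lemma naive_ext_normal_expansion:
  assumes "normal_expansion A R A' R'" and "naive_ext A R E" and "\<forall>x\<in>A' - A. (x, x) \<in> R'"
  shows "naive_ext A' R' E"
proof -
  have "E \<subseteq> A" and "conflict_free R E"
    using assms(2) unfolding naive_ext_def by auto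
  then have "conflict_free R' E"
    using normal_expansion_old_attack[OF assms(1)] unfolding conflict_free_def by (meson subsetD)
  moreover have "T = E" if "E \<subseteq> T" "T \<subseteq> A'" "conflict_free R' T" for T
  proof -
    have "T \<subseteq> A"
      using that assms(3) unfolding conflict_free_def by blast
    moreover have "conflict_free R T"
      using that(3) assms(1) unfolding conflict_free_def normal_expansion_def by blast
    ultimately show ?thesis
      using that(1) assms(2) unfolding naive_ext_def by blast
  qed
  moreover have "E \<subseteq> A'"
    using \<open>E \<subseteq> A\<close> assms(1) unfolding normal_expansion_def by auto
  ultimately show ?thesis
    unfolding naive_ext_def by auto
qed

lemma cf2_ext_normal_expansion_single_scc:
  assumes "finite A'" and "R \<subseteq> A \<times> A" and "normal_expansion A R A' R'"
    and "card (SCCS A' R') \<le> 1" and "cf2_ext A R E"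
  obtains E' where "cf2_ext A' R' E'" and "\<not> E' \<subseteq> A \<or> E' = E"
proof (cases "\<forall>x\<in>A' - A. (x, x) \<in> R'")
  case True
  then have "naive_ext A' R' E"
    using assms(2,3,5) cf2_ext_imp_naive_ext naive_ext_normal_expansion by blast
  then show ?thesis
    using that cf2_ext.base[OF assms(4)] by blast
next
  case False
  then obtain x where x: "x \<in> A' - A" "(x, x) \<notin> R'"
    by blast
  then obtain E' where "{x} \<subseteq> E'" and "naive_ext A' R' E'"
    using naive_ext_exists[OF assms(1), of "{x}" R'] unfolding conflict_free_def by blast
  then show ?thesis
    using that cf2_ext.base[OF assms(4)] x by blast
qed

lemma cf2_ext_normal_expansion:
  assumes "finite A'" and "R \<subseteq> A \<times> A" and "R' \<subseteq> A' \<times> A'"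
    and "normal_expansion A R A' R'" and "cf2_ext A R E"
  shows "\<exists>E'. cf2_ext A' R' E' \<and> (\<not> E' \<subseteq> A \<or> E' = E)"
  using assms
proof (induction "card A'" arbitrary: A R A' R' E rule: less_induct)
  case less
  have "finite A"
    using less.prems(1,4) finite_subset unfolding normal_expansion_def by blast
  have "E \<subseteq> A"
    using less.prems(5) by (rule cf2_ext_subset)
  have IH: "\<exists>F'. cf2_ext B' (restrict_att R' B') F' \<and> (\<not> F' \<subseteq> B \<or> F' = F)"
    if "B' \<subset> A'" "normal_expansion B S B' (restrict_att R' B')" "S \<subseteq> B \<times> B" "cf2_ext B S F"
    for B S B' F
    using less.hyps[OF _ _ that(3) restrict_att_subset that(2,4)] that(1) less.prems(1)
    by (meson finite_subset psubset_card_mono psubset_imp_subset)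
  show ?case
  proof (cases "card (SCCS A' R') \<le> 1")
    case True
    then show ?thesis
      using cf2_ext_normal_expansion_single_scc[OF less.prems(1,2,4) True less.prems(5)] by metis
  next
    case False
    then obtain U' where "U' \<subseteq> A'" "U' \<noteq> {}" "U' \<noteq> A'" and "unattacked R' U'"
      using ex_proper_unattacked[OF less.prems(1,3)] by auto
    define U where "U = U' \<inter> A"
    define W where "W = A - U - R `` (E \<inter> U)"
    have "cf2_ext U (restrict_att R U) (E \<inter> U)" and E_W: "cf2_ext W (restrict_att R W) (E - U)"
      using cf2_ext_split_unattacked[OF \<open>finite A\<close> less.prems(2) \<open>E \<subseteq> A\<close>, where U=U] less.prems(5)
        normal_expansion_unattacked_Int[OF less.prems(4,2) \<open>unattacked R' U'\<close>]
      unfolding U_def W_def by auto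
    moreover have "normal_expansion U (restrict_att R U) U' (restrict_att R' U')"
      unfolding U_def by (rule normal_expansion_restrict[OF less.prems(4)]) auto
    ultimately obtain E1 where E1: "cf2_ext U' (restrict_att R' U') E1" "\<not> E1 \<subseteq> U \<or> E1 = E \<inter> U"
      using IH[of U'] \<open>U' \<subseteq> A'\<close> \<open>U' \<noteq> A'\<close> restrict_att_subset by blast
    define W' where "W' = A' - U' - R' `` E1"
    have "W' \<subset> A'"
      using \<open>U' \<noteq> {}\<close> \<open>U' \<subseteq> A'\<close> unfolding W'_def by blast
    have cf2_Un: "cf2_ext A' R' (E1 \<union> E2)" if "cf2_ext W' (restrict_att R' W') E2" for E2
      using cf2_ext_Un_unattacked[OF less.prems(1,3) \<open>U' \<subseteq> A'\<close> \<open>unattacked R' U'\<close> E1(1)] that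
      unfolding W'_def .
    show ?thesis
    proof (cases "E1 = E \<inter> U")
      case True
      then have "W' \<inter> A = W"
        using normal_expansion_remainder[OF less.prems(4,2), of "E \<inter> U"] \<open>E \<subseteq> A\<close>
        unfolding W_def W'_def U_def by blast
      then obtain E2 where E2: "cf2_ext W' (restrict_att R' W') E2" "\<not> E2 \<subseteq> W \<or> E2 = E - U"
        using IH[OF \<open>W' \<subset> A'\<close> _ restrict_att_subset E_W] normal_expansion_restrict[OF less.prems(4)]
        by blast
      have "\<not> E1 \<union> E2 \<subseteq> A \<or> E1 \<union> E2 = E"
        using E2 cf2_ext_subset[OF E2(1)] True \<open>W' \<inter> A = W\<close> by blast
      then show ?thesis
        using cf2_Un[OF E2(1)] by blast
    next
      case False
      have "cf2_ext {} {} {}"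
        using cf2_ext_iff_cf2_on_scc_of[of "{}" "{}" "{}"] by simp
      \<comment> \<open>Existence of a CF2 extension is the induction hypothesis for the empty framework.\<close>
      then obtain E2 where "cf2_ext W' (restrict_att R' W') E2"
        using IH[OF \<open>W' \<subset> A'\<close>, of "{}" "{}"] unfolding normal_expansion_def by blast
      moreover have "\<not> E1 \<union> E2 \<subseteq> A"
        using False E1 cf2_ext_subset[OF E1(1)] unfolding U_def by blast
      ultimately show ?thesis
        using cf2_Un by blast
    qed
  qed
qed

theorem proposition40:
  fixes AR AR' :: "'a set" and Att Att' :: "('a \<times> 'a) set"
  assumes "is_AF AR Att" and "is_AF AR' Att'"
    and "normal_expansion AR Att AR' Att'"
  shows "\<forall>E. cf2_ext AR Att E \<longrightarrow>
           (\<exists>E'. cf2_ext AR' Att' E' \<and> (\<not> E' \<subseteq> AR \<or> E' = E))"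
  using cf2_ext_normal_expansion assms unfolding is_AF_def by blast

end
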